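(* Let $X=(X_1,\ldots,X_n)$ be a random vector with finitely many values, $Y$ a random variable with finitely many values (each with positive probability), and $L$ any partition lattice of $[n]$ with Möbius function $\mathfrak{m}$. If $X_1,\ldots,X_n$ are jointly independent given $Y$, then $$\ell_{1\cdots n}=\sum_{\pi\in L}\mathfrak{m}(\pi,[n])\prod_{B\in\pi}\mathbb{E}\Big[\prod_{i\in B}\mu_i^Y\Big],$$ i.e. $\ell_{1\cdots n}$ equals the $L$-cumulant of the random vector $(\mu_1^Y,\ldots,\mu_n^Y)$.
   Context: A partition lattice of $[n]$ is a subset of the set of set partitions of $[n]$ containing $[n]$ and $1|2|\cdots|n$ which is a lattice under refinement. $\mu_B=\mathbb{E}[\prod_{i\in B}X_i]$; $\ell_{1\cdots n}=\sum_{\pi\in L}\mathfrak{m}(\pi,[n])\prod_{B\in\pi}\mu_B$. $\mu_i^Y$ is the random variable $y\mapsto\mathbb{E}[X_i\mid Y=y]$. *)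

theory Defs
  imports "HOL-Probability.Probability" "HOL-Library.Disjoint_Sets"
begin

definition refines :: "'a set set \<Rightarrow> 'a set set \<Rightarrow> bool" where
  "refines p q \<longleftrightarrow> (\<forall>B\<in>p. \<exists>C\<in>q. B \<subseteq> C)"

definition partition_lattice :: "nat \<Rightarrow> nat set set set \<Rightarrow> bool" where
  "partition_lattice n L \<longleftrightarrow>
     L \<subseteq> {p. partition_on {1..n} p} \<and>
     {{1..n}} \<in> L \<and>
     {{i} | i. i \<in> {1..n}} \<in> L \<and>
     (\<forall>a\<in>L. \<forall>b\<in>L.
        (\<exists>c\<in>L. refines a c \<and> refines b c \<and>
              (\<forall>d\<in>L. refines a d \<and> refines b d \<longrightarrow> refines c d)) \<and>
        (\<exists>c\<in>L. refines c a \<and> refines c b \<and>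
              (\<forall>d\<in>L. refines d a \<and> refines d b \<longrightarrow> refines d c)))"

text \<open>Moebius function of the (finite) poset (L, refines): the inverse of the
  zeta function in the incidence algebra, i.e. the unique function m with
  m(x,y) = 0 unless x \<le> y and  sum_{x \<le> z \<le> y} m(x,z) = [x = y] for x \<le> y in L.\<close>
definition mobius :: "nat set set set \<Rightarrow> nat set set \<Rightarrow> nat set set \<Rightarrow> real" where
  "mobius L = (THE m. (\<forall>x\<in>L. \<forall>y\<in>L.
        (\<not> refines x y \<longrightarrow> m x y = 0) \<and>
        (refines x y \<longrightarrow>
           (\<Sum>z\<in>{z\<in>L. refines x z \<and> refines z y}. m x z) = (if x = y then 1 else 0)))
      \<and> (\<forall>x y. (x \<notin> L \<or> y \<notin> L) \<longrightarrow> m x y = 0))"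

definition cond_exp_at :: "'a measure \<Rightarrow> ('a \<Rightarrow> real) \<Rightarrow> ('a \<Rightarrow> 'b) \<Rightarrow> 'b \<Rightarrow> real" where
  "cond_exp_at M X Y y =
     (\<integral>\<omega>. X \<omega> * indicator {\<omega>\<in>space M. Y \<omega> = y} \<omega> \<partial>M) / measure M {\<omega>\<in>space M. Y \<omega> = y}"

end

theory Submission
  imports Defs
begin

(* The two sides of the identity are the same Moebius-weighted sums over L,
   so it suffices to prove, block by block, the moment identity
       E[ prod_{i in B} X_i ] = E[ prod_{i in B} mu_i^Y ]     for every block B of [n].
   Since Y takes finitely many values, both expectations split into sums over the fibres
   {Y = y}.  On a fibre of positive probability, conditional independence (independence
   under the uniform measure on the fibre) factorises the left-hand contribution into
   P(Y = y) * prod_{i in B} E[X_i | Y = y], while the integrand on the right is constant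
   on the fibre with exactly that value times the fibre's probability. *)

abbreviation fibre :: "'a measure \<Rightarrow> ('a \<Rightarrow> 'b) \<Rightarrow> 'b \<Rightarrow> 'a set" where
  "fibre M Y y \<equiv> {\<omega>\<in>space M. Y \<omega> = y}"

lemma fibre_sets:
  assumes "Y \<in> measurable M (count_space UNIV)"
  shows "fibre M Y y \<in> sets M"
proof -
  have "fibre M Y y = Y -` {y} \<inter> space M" by auto
  then show ?thesis using measurable_sets[OF assms, of "{y}"] by simp
qed

text \<open>A measurable real function with finitely many values is integrable on a finite
  measure space, being bounded by the sum of the absolute values it takes.\<close>
lemma finite_range_integrable:
  fixes f :: "'a \<Rightarrow> real"
  assumes "finite_measure M" "f \<in> borel_measurable M" "finite (f ` space M)"
  shows "integrable M f"
proof -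
  interpret finite_measure M by fact
  show ?thesis
  proof (rule integrable_const_bound[where B="\<Sum>v\<in>f ` space M. \<bar>v\<bar>"])
    show "AE x in M. norm (f x) \<le> (\<Sum>v\<in>f ` space M. \<bar>v\<bar>)"
      using member_le_sum[of _ "f ` space M" abs] assms(3) by (intro AE_I2) auto
  qed fact
qed

text \<open>A finite product of finite-range functions has finite range: its values are
  images of the finite set of choice functions picking one value of each factor.\<close>
lemma finite_range_prod:
  fixes X :: "'i \<Rightarrow> 'a \<Rightarrow> 'c :: comm_monoid_mult"
  assumes "finite B" "\<And>i. i \<in> B \<Longrightarrow> finite (X i ` S)"
  shows "finite ((\<lambda>\<omega>. \<Prod>i\<in>B. X i \<omega>) ` S)"
proof -
  have "(\<lambda>\<omega>. \<Prod>i\<in>B. X i \<omega>) ` S \<subseteq> (\<lambda>f. \<Prod>i\<in>B. f i) ` (\<Pi>\<^sub>E i\<in>B. X i ` S)"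
  proof
    fix v assume "v \<in> (\<lambda>\<omega>. \<Prod>i\<in>B. X i \<omega>) ` S"
    then obtain \<omega> where "\<omega> \<in> S" "v = (\<Prod>i\<in>B. X i \<omega>)" by auto
    then show "v \<in> (\<lambda>f. \<Prod>i\<in>B. f i) ` (\<Pi>\<^sub>E i\<in>B. X i ` S)"
      by (intro image_eqI[where x="restrict (\<lambda>i. X i \<omega>) B"]) auto
  qed
  moreover have "finite (\<Pi>\<^sub>E i\<in>B. X i ` S)" using assms by (intro finite_PiE) auto
  ultimately show ?thesis by (meson finite_imageI finite_subset)
qed

lemma integral_uniform_measure_real:
  fixes g :: "'a \<Rightarrow> real"
  assumes "finite_measure M" "A \<in> sets M" "measure M A > 0" "g \<in> borel_measurable M"
  shows "(\<integral>x. g x \<partial>uniform_measure M A) = (\<integral>x. g x * indicator A x \<partial>M) / measure M A"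
proof -
  interpret finite_measure M by fact
  have inv: "1 / ennreal (measure M A) = ennreal (1 / measure M A)"
    using assms(3) by (metis divide_ennreal ennreal_1 zero_le_one)
  have "uniform_measure M A = density M (\<lambda>x. ennreal (indicator A x / measure M A))"
    unfolding uniform_measure_def emeasure_eq_measure
    by (intro density_cong) (use assms in \<open>auto simp: inv indicator_def\<close>)
  then have "(\<integral>x. g x \<partial>uniform_measure M A) = (\<integral>x. (indicator A x / measure M A) *\<^sub>R g x \<partial>M)"
    using assms by (simp add: integral_density)
  then show ?thesis by (simp add: mult.commute)
qed

lemma integral_sum_fibres:
  fixes h :: "'a \<Rightarrow> real"
  assumes Y: "Y \<in> measurable M (count_space UNIV)" and fin: "finite (Y ` space M)"
    and h: "integrable M h"
  shows "(\<integral>\<omega>. h \<omega> \<partial>M) = (\<Sum>y\<in>Y ` space M. \<integral>\<omega>. h \<omega> * indicator (fibre M Y y) \<omega> \<partial>M)"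
proof -
  have "(\<integral>\<omega>. h \<omega> \<partial>M) = (\<integral>\<omega>. (\<Sum>y\<in>Y ` space M. h \<omega> * indicator (fibre M Y y) \<omega>) \<partial>M)"
  proof (rule Bochner_Integration.integral_cong[OF refl])
    fix \<omega> assume \<omega>: "\<omega> \<in> space M"
    have "(\<Sum>y\<in>Y ` space M. h \<omega> * indicator (fibre M Y y) \<omega>)
        = (\<Sum>y\<in>{Y \<omega>}. h \<omega> * indicator (fibre M Y y) \<omega>)"
      by (rule sum.mono_neutral_right) (use \<omega> fin in \<open>auto split: split_indicator\<close>)
    then show "h \<omega> = (\<Sum>y\<in>Y ` space M. h \<omega> * indicator (fibre M Y y) \<omega>)"
      using \<omega> by simp
  qed
  also have "\<dots> = (\<Sum>y\<in>Y ` space M. \<integral>\<omega>. h \<omega> * indicator (fibre M Y y) \<omega> \<partial>M)"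
    using h fibre_sets[OF Y]
    by (intro Bochner_Integration.integral_sum) (auto intro: integrable_real_mult_indicator)
  finally show ?thesis .
qed

text \<open>A function of \<open>Y\<close> is constant on each fibre of \<open>Y\<close>.\<close>
lemma integral_fibre_function_of:
  fixes g :: "'b \<Rightarrow> real"
  assumes "finite_measure M" "Y \<in> measurable M (count_space UNIV)"
  shows "(\<integral>\<omega>. g (Y \<omega>) * indicator (fibre M Y y) \<omega> \<partial>M) = g y * measure M (fibre M Y y)"
proof -
  interpret finite_measure M by fact
  have "(\<integral>\<omega>. g (Y \<omega>) * indicator (fibre M Y y) \<omega> \<partial>M)
      = (\<integral>\<omega>. g y * indicator (fibre M Y y) \<omega> \<partial>M)"
    by (rule Bochner_Integration.integral_cong[OF refl]) (auto simp: indicator_def)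
  also have "\<dots> = g y * measure M (fibre M Y y)"
    using fibre_sets[OF assms(2)] by simp
  finally show ?thesis .
qed

lemma fibre_moment_cond_indep:
  fixes X :: "'i \<Rightarrow> 'a \<Rightarrow> real"
  assumes M: "prob_space M" and Y: "Y \<in> measurable M (count_space UNIV)"
    and pos: "measure M (fibre M Y y) > 0"
    and B: "finite B"
    and X: "\<And>i. i \<in> B \<Longrightarrow> X i \<in> borel_measurable M"
    and Xfin: "\<And>i. i \<in> B \<Longrightarrow> finite (X i ` space M)"
    and indep: "prob_space.indep_vars (uniform_measure M (fibre M Y y)) (\<lambda>_. borel) X B"
  shows "(\<integral>\<omega>. (\<Prod>i\<in>B. X i \<omega>) * indicator (fibre M Y y) \<omega> \<partial>M)
       = measure M (fibre M Y y) * (\<Prod>i\<in>B. cond_exp_at M (X i) Y y)"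
proof -
  interpret prob_space M by fact
  let ?A = "fibre M Y y"
  let ?U = "uniform_measure M ?A"
  have A: "?A \<in> sets M" using fibre_sets[OF Y] .
  have "emeasure M ?A \<noteq> 0" "emeasure M ?A \<noteq> \<infinity>"
    using pos by (auto simp: emeasure_eq_measure)
  then interpret U: prob_space ?U by (rule prob_space_uniform_measure)
  have intU: "integrable ?U (X i)" if "i \<in> B" for i
    using X[OF that] Xfin[OF that]
    by (intro finite_range_integrable U.finite_measure_axioms) (simp_all cong: measurable_cong_sets)
  have mean: "(\<integral>\<omega>. X i \<omega> \<partial>?U) = cond_exp_at M (X i) Y y" if "i \<in> B" for i
    using integral_uniform_measure_real[OF finite_measure_axioms A pos X[OF that]]
    by (simp add: cond_exp_at_def)
  have "(\<integral>\<omega>. (\<Prod>i\<in>B. X i \<omega>) * indicator ?A \<omega> \<partial>M)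
      = measure M ?A * (\<integral>\<omega>. (\<Prod>i\<in>B. X i \<omega>) \<partial>?U)"
    using integral_uniform_measure_real[OF finite_measure_axioms A pos, of "\<lambda>\<omega>. \<Prod>i\<in>B. X i \<omega>"]
      pos X by simp
  also have "(\<integral>\<omega>. (\<Prod>i\<in>B. X i \<omega>) \<partial>?U) = (\<Prod>i\<in>B. \<integral>\<omega>. X i \<omega> \<partial>?U)"
    using U.indep_vars_lebesgue_integral[OF B indep intU] .
  also have "\<dots> = (\<Prod>i\<in>B. cond_exp_at M (X i) Y y)"
    using mean by (rule prod.cong[OF refl])
  finally show ?thesis .
qed

lemma moment_eq_cond_mean_moment:
  fixes X :: "'i \<Rightarrow> 'a \<Rightarrow> real"
  assumes M: "prob_space M" and B: "finite B"
    and X: "\<And>i. i \<in> B \<Longrightarrow> X i \<in> borel_measurable M"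
    and Xfin: "\<And>i. i \<in> B \<Longrightarrow> finite (X i ` space M)"
    and Y: "Y \<in> measurable M (count_space UNIV)" and Yfin: "finite (Y ` space M)"
    and pos: "\<And>y. y \<in> Y ` space M \<Longrightarrow> measure M (fibre M Y y) > 0"
    and indep: "\<And>y. y \<in> Y ` space M \<Longrightarrow>
                  prob_space.indep_vars (uniform_measure M (fibre M Y y)) (\<lambda>_. borel) X B"
  shows "(\<integral>\<omega>. (\<Prod>i\<in>B. X i \<omega>) \<partial>M) = (\<integral>\<omega>. (\<Prod>i\<in>B. cond_exp_at M (X i) Y (Y \<omega>)) \<partial>M)"
proof -
  interpret prob_space M by fact
  define \<mu> where "\<mu> y = (\<Prod>i\<in>B. cond_exp_at M (X i) Y y)" for y
  have \<mu>Y: "(\<lambda>\<omega>. \<mu> (Y \<omega>)) \<in> borel_measurable M"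
    using measurable_compose[OF Y, of \<mu> borel] by simp
  have int_X: "integrable M (\<lambda>\<omega>. \<Prod>i\<in>B. X i \<omega>)"
    using X finite_range_prod[OF B Xfin]
    by (intro finite_range_integrable finite_measure_axioms) auto
  have "(\<lambda>\<omega>. \<mu> (Y \<omega>)) ` space M = \<mu> ` Y ` space M" by auto
  then have int_\<mu>: "integrable M (\<lambda>\<omega>. \<mu> (Y \<omega>))"
    using \<mu>Y Yfin by (intro finite_range_integrable finite_measure_axioms) auto
  have fibrewise: "(\<integral>\<omega>. (\<Prod>i\<in>B. X i \<omega>) * indicator (fibre M Y y) \<omega> \<partial>M)
                 = (\<integral>\<omega>. \<mu> (Y \<omega>) * indicator (fibre M Y y) \<omega> \<partial>M)" if "y \<in> Y ` space M" for y
    using fibre_moment_cond_indep[OF M Y pos[OF that] B X Xfin indep[OF that]]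
      integral_fibre_function_of[OF finite_measure_axioms Y, of \<mu>]
    by (simp add: \<mu>_def mult.commute)
  show ?thesis
    using integral_sum_fibres[OF Y Yfin int_X] integral_sum_fibres[OF Y Yfin int_\<mu>] fibrewise
    by (simp add: \<mu>_def)
qed

theorem proposition5p9:
  fixes M :: "'a measure" and n :: nat and L :: "nat set set set"
    and X :: "nat \<Rightarrow> 'a \<Rightarrow> real" and Y :: "'a \<Rightarrow> 'b"
  assumes "prob_space M"
    and "\<And>i. i \<in> {1..n} \<Longrightarrow> X i \<in> borel_measurable M"
    and "\<And>i. i \<in> {1..n} \<Longrightarrow> finite (X i ` space M)"
    and "Y \<in> measurable M (count_space UNIV)"
    and "finite (Y ` space M)"
    and "\<And>y. y \<in> Y ` space M \<Longrightarrow> measure M {\<omega>\<in>space M. Y \<omega> = y} > 0"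
    and "partition_lattice n L"
    and "\<And>y. y \<in> Y ` space M \<Longrightarrow>
           prob_space.indep_vars (uniform_measure M {\<omega>\<in>space M. Y \<omega> = y})
             (\<lambda>_. borel) X {1..n}"
  shows "(\<Sum>p\<in>L. mobius L p {{1..n}} * (\<Prod>B\<in>p. \<integral>\<omega>. (\<Prod>i\<in>B. X i \<omega>) \<partial>M))
       = (\<Sum>p\<in>L. mobius L p {{1..n}} *
            (\<Prod>B\<in>p. \<integral>\<omega>. (\<Prod>i\<in>B. cond_exp_at M (X i) Y (Y \<omega>)) \<partial>M))"
proof -
  have block_moment:
    "(\<integral>\<omega>. (\<Prod>i\<in>B. X i \<omega>) \<partial>M) = (\<integral>\<omega>. (\<Prod>i\<in>B. cond_exp_at M (X i) Y (Y \<omega>)) \<partial>M)"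
    if B: "B \<subseteq> {1..n}" for B
  proof (rule moment_eq_cond_mean_moment)
    show "finite B" using B finite_subset by blast
    fix y assume y: "y \<in> Y ` space M"
    interpret prob_space M by fact
    have "emeasure M (fibre M Y y) \<noteq> 0" "emeasure M (fibre M Y y) \<noteq> \<infinity>"
      using assms(6)[OF y] by (auto simp: emeasure_eq_measure)
    then interpret U: prob_space "uniform_measure M (fibre M Y y)"
      by (rule prob_space_uniform_measure)
    show "U.indep_vars (\<lambda>_. borel) X B" using U.indep_vars_subset[OF assms(8)[OF y] B] .
  qed (use assms B in auto)
  have "(\<Prod>B\<in>p. \<integral>\<omega>. (\<Prod>i\<in>B. X i \<omega>) \<partial>M)
      = (\<Prod>B\<in>p. \<integral>\<omega>. (\<Prod>i\<in>B. cond_exp_at M (X i) Y (Y \<omega>)) \<partial>M)" if "p \<in> L" for p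
    using that assms(7) block_moment
    by (intro prod.cong) (auto simp: partition_lattice_def partition_on_def)
  then show ?thesis by simp
qed

end
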